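(* Let $\mu_X,\mu_Y\in\mathbb{C}$, $\sigma_X,\sigma_Y>0$ and $\rho\in\mathbb{C}$ with $|\rho|\le 1$. Let $(V_X,V_Y)$ be a zero-mean, jointly circularly-symmetric complex Gaussian random vector with $V_X\sim\mathcal{CN}(0,\sigma_X^2)$, $V_Y\sim\mathcal{CN}(0,\sigma_Y^2)$ and $\mathbb{E}[V_XV_Y^*]=\rho\sigma_X\sigma_Y$. Put $X=\mu_X+V_X$, $Y=\mu_Y+V_Y$ and $\mathcal{P}=XY^*$. For integers $t\ge 0$ and $0\le i,j\le t$ define the ordered lists $$A_{t,i}=(\underbrace{V_X,\dots,V_X}_{i},\underbrace{V_Y,\dots,V_Y}_{t-i}),\qquad B_{t,j}=(\underbrace{V_X^*,\dots,V_X^*}_{t-j},\underbrace{V_Y^*,\dots,V_Y^*}_{j}),$$ and write $A_{t,i}^{(k)}$, $B_{t,j}^{(k)}$ for their $k$-th entries. Then for all integers $m,n\ge 0$ the joint moment $\mathcal{M}_{m,n}=\mathbb{E}[\mathcal{P}^m(\mathcal{P}^n)^*]$ equals $$\mathcal{M}_{m,n}=\sum_{t=0}^{m+n}\sum_{i=0}^{t}\sum_{j=0}^{t}\binom{m}{i}\binom{m}{j}\binom{n}{t-j}\binom{n}{t-i}\,\mu_X^{m-i}\,(\mu_Y^{m-j})^*\,(\mu_X^{n-t+j})^*\,\mu_Y^{n-t+i}\sum_{\pi\in\Omega_t}\prod_{k=1}^{t}\mathbb{E}\big[A_{t,i}^{(\pi(k))}B_{t,j}^{(k)}\big],$$ where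 $\Omega_t$ is the set of all $t!$ permutations $\pi$ of $\{1,\dots,t\}$ (for $t=0$ the inner sum is $1$).
   Context: $\mathcal{CN}(0,\sigma^2)$ denotes the zero-mean circularly-symmetric complex Gaussian distribution with $\mathbb{E}|V|^2=\sigma^2$; $(\cdot)^*$ is complex conjugation. Binomial coefficients $\binom{a}{b}$ are taken to be $0$ when $b<0$ or $b>a$. *)

theory Defs
  imports "HOL-Probability.Probability"
begin

text \<open>(VX, VY) is a zero-mean jointly circularly-symmetric complex Gaussian vector with
  E|VX|^2 = sX^2, E|VY|^2 = sY^2 and E[VX * cnj VY] = rho * sX * sY.
  Defined through the characteristic function of the underlying real 4-vector
  (Re VX, Im VX, Re VY, Im VY): for all complex a, b the scalar
  W = cnj a * VX + cnj b * VY is CN(0, s) with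
  s = |a|^2 sX^2 + |b|^2 sY^2 + 2 Re(cnj a * b * rho) sX sY, i.e.
  E[exp(i Re W)] = exp(-s/4).  This also covers the degenerate case |rho| = 1.\<close>
definition jointly_cscg ::
  "'a measure \<Rightarrow> ('a \<Rightarrow> complex) \<Rightarrow> ('a \<Rightarrow> complex) \<Rightarrow> real \<Rightarrow> real \<Rightarrow> complex \<Rightarrow> bool" where
  "jointly_cscg M VX VY sX sY rho \<longleftrightarrow>
     VX \<in> borel_measurable M \<and> VY \<in> borel_measurable M \<and>
     (\<forall>a b :: complex.
        (LINT \<omega>|M. cis (Re (cnj a * VX \<omega> + cnj b * VY \<omega>))) =
        complex_of_real (exp (- ((cmod a)\<^sup>2 * sX\<^sup>2 + (cmod b)\<^sup>2 * sY\<^sup>2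
                                 + 2 * Re (cnj a * b * rho) * sX * sY) / 4)))"

text \<open>The ordered lists A_{t,i} and B_{t,j}, 0-indexed (entry k for k < t).\<close>
definition listA :: "('a \<Rightarrow> complex) \<Rightarrow> ('a \<Rightarrow> complex) \<Rightarrow> nat \<Rightarrow> nat \<Rightarrow> nat \<Rightarrow> 'a \<Rightarrow> complex" where
  "listA VX VY t i k = (if k < i then VX else VY)"

definition listB :: "('a \<Rightarrow> complex) \<Rightarrow> ('a \<Rightarrow> complex) \<Rightarrow> nat \<Rightarrow> nat \<Rightarrow> nat \<Rightarrow> 'a \<Rightarrow> complex" where
  "listB VX VY t j k = (if k < t - j then (\<lambda>\<omega>. cnj (VX \<omega>)) else (\<lambda>\<omega>. cnj (VY \<omega>)))"

end

theory Submission
  imports Defs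
begin

text \<open>Expanding both powers binomially reduces the moment to the mixed moments
  \<open>E[VX^i cnj VY^j cnj VX^a VY^b]\<close>. These are instances of the complex Isserlis (Wick) theorem:
  for linear combinations \<open>L\<^sub>1, \<dots>, L\<^sub>a\<close> and \<open>L'\<^sub>1, \<dots>, L'\<^sub>b\<close> of \<open>VX, VY\<close>, the moment
  \<open>E[\<Prod> L\<^sub>k \<Prod> cnj L'\<^sub>k]\<close> vanishes unless \<open>a = b\<close>, and then it is the permanent
  \<open>\<Sum>\<^sub>\<pi> \<Prod>\<^sub>k E[L\<^sub>\<pi>\<^sub>k cnj L'\<^sub>k]\<close>. Both sides are linear in each \<open>L\<^sub>k\<close>, conjugate-linear in
  each \<open>L'\<^sub>k\<close> and symmetric, so by polarization it suffices to compare them when all \<open>L\<^sub>k\<close> and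
  \<open>L'\<^sub>k\<close> equal one \<open>L\<close>. The characteristic-function hypothesis makes every \<open>Re (c L)\<close> with
  \<open>|c| = 1\<close> a centred normal variable of one and the same variance, and averaging the binomial
  expansion of \<open>(2 Re (c L))\<^sup>k\<close> over such rotations \<open>c\<close> gives
  \<open>E[L\<^sup>p cnj L\<^sup>q] = [p = q] p! (E|L|\<^sup>2)\<^sup>p\<close>. Finally the terms are regrouped by \<open>t = i + b\<close>.\<close>

section \<open>Moments of Gaussian random variables\<close>

lemma distr_eq_scaled_std_normal:
  fixes R :: "'a \<Rightarrow> real"
  assumes M: "prob_space M" and R: "R \<in> borel_measurable M"
    and char: "\<And>s. (CLINT \<omega>|M. iexp (s * R \<omega>)) = exp (- (s * \<sigma>)\<^sup>2 / 2)"
  shows "distr M borel R = distr std_normal_distribution borel ((*) \<sigma>)"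
proof (rule Levy_uniqueness)
  show "real_distribution (distr M borel R)"
    using prob_space.prob_space_distr[OF M R] by (simp add: real_distribution_def real_distribution_axioms_def)
  show "real_distribution (distr std_normal_distribution borel ((*) \<sigma>))"
  proof -
    have "prob_space (distr std_normal_distribution borel ((*) \<sigma>))"
      by (rule prob_space.prob_space_distr[OF prob_space_normal_density]) measurable
    then show ?thesis by (simp add: real_distribution_def real_distribution_axioms_def)
  qed
  show "char (distr M borel R) = char (distr std_normal_distribution borel ((*) \<sigma>))"
  proof
    fix t
    have "char (distr M borel R) t = (CLINT \<omega>|M. iexp (t * R \<omega>))"
      unfolding char_def by (rule integral_distr[OF R]) measurable
    also have "\<dots> = char std_normal_distribution (t * \<sigma>)"
      using char[of t] by (simp add: char_std_normal_distribution)
    also have "\<dots> = char (distr std_normal_distribution borel ((*) \<sigma>)) t"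
      unfolding char_def by (subst integral_distr) (auto simp: mult.assoc)
    finally show "char (distr M borel R) t = char (distr std_normal_distribution borel ((*) \<sigma>)) t" .
  qed
qed

lemma
  fixes R :: "'a \<Rightarrow> real"
  assumes M: "prob_space M" and R: "R \<in> borel_measurable M"
    and char: "\<And>s. (CLINT \<omega>|M. iexp (s * R \<omega>)) = exp (- (s * \<sigma>)\<^sup>2 / 2)"
  shows integrable_normal_power: "integrable M (\<lambda>\<omega>. R \<omega> ^ k)"
    and integral_normal_power: "(LINT \<omega>|M. R \<omega> ^ k) = \<sigma> ^ k * (LINT x|std_normal_distribution. x ^ k)"
proof -
  note D = distr_eq_scaled_std_normal[OF M R char]
  have "integrable std_normal_distribution (\<lambda>x. (\<sigma> * x) ^ k)"
    unfolding power_mult_distrib by (intro integrable_mult_right integrable_std_normal_distribution_moment)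
  then have "integrable (distr M borel R) (\<lambda>x. x ^ k)"
    unfolding D by (subst integrable_distr_eq) auto
  then show "integrable M (\<lambda>\<omega>. R \<omega> ^ k)"
    using R by (subst (asm) integrable_distr_eq) auto
  have "(LINT \<omega>|M. R \<omega> ^ k) = (LINT x|distr M borel R. x ^ k)"
    by (rule integral_distr[symmetric, OF R]) measurable
  also have "\<dots> = (LINT x|std_normal_distribution. (\<sigma> * x) ^ k)"
    unfolding D by (subst integral_distr) auto
  finally show "(LINT \<omega>|M. R \<omega> ^ k) = \<sigma> ^ k * (LINT x|std_normal_distribution. x ^ k)"
    by (simp add: power_mult_distrib)
qed

lemma std_normal_even_moment_scaled:
  assumes "v \<ge> 0"
  shows "2 ^ (2 * p) * (sqrt (v / 2) ^ (2 * p) * (LINT x|std_normal_distribution. x ^ (2 * p)))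
    = real ((2 * p) choose p) * (fact p * v ^ p)"
proof -
  have "sqrt (v / 2) ^ (2 * p) = (v / 2) ^ p"
    unfolding power_mult using assms by simp
  moreover have "real ((2 * p) choose p) = fact (2 * p) / (fact p * fact p)"
    by (subst binomial_fact) auto
  moreover have "(2::real) ^ (2 * p) = 2 ^ p * 2 ^ p"
    by (simp add: power_add[symmetric] mult_2)
  ultimately show ?thesis
    unfolding std_normal_distribution_even_moments(1) by (simp add: power_divide field_simps)
qed

section \<open>Polarization\<close>

lemma sum_coeffs_eq_0_if_poly_eq_0:
  fixes S :: "'s set" and d :: "'s \<Rightarrow> nat" and h :: "'s \<Rightarrow> complex"
  assumes fin: "finite S" and vanish: "\<And>s::real. (\<Sum>x\<in>S. complex_of_real s ^ d x * h x) = 0"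
  shows "(\<Sum>x\<in>{x\<in>S. d x = n}. h x) = 0"
proof -
  define N where "N = Max (insert 0 (d ` S))"
  have d_le: "x \<in> S \<Longrightarrow> d x \<le> N" for x unfolding N_def using fin by (intro Max_ge) auto
  define c where "c m = (\<Sum>x\<in>{x\<in>S. d x = m}. h x)" for m
  have poly: "(\<Sum>m\<le>N. c m * complex_of_real s ^ m) = 0" for s
  proof -
    have "(\<Sum>m\<le>N. c m * complex_of_real s ^ m) = (\<Sum>m\<le>N. \<Sum>x\<in>{x\<in>S. d x = m}. complex_of_real s ^ d x * h x)"
      unfolding c_def sum_distrib_right by (intro sum.cong refl) (simp add: mult.commute)
    also have "\<dots> = (\<Sum>x\<in>S. complex_of_real s ^ d x * h x)"
      by (rule sum.group) (use fin d_le in auto)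
    finally show ?thesis using vanish by simp
  qed
  have "(\<Sum>m\<le>N. Re (c m) * s ^ m) = 0" "(\<Sum>m\<le>N. Im (c m) * s ^ m) = 0" for s
    using arg_cong[OF poly[of s], of Re] arg_cong[OF poly[of s], of Im] by (simp_all add: Re_sum Im_sum)
  then have "\<forall>m\<le>N. Re (c m) = 0" "\<forall>m\<le>N. Im (c m) = 0"
    using polyfun_eq_0[of "\<lambda>m. Re (c m)" N] polyfun_eq_0[of "\<lambda>m. Im (c m)" N] by blast+
  then have c_eq_0: "c m = 0" if "m \<le> N" for m
    using that by (simp add: complex_eq_iff)
  show ?thesis
  proof (cases "n \<le> N")
    case False
    then have "{x\<in>S. d x = n} = {}" using d_le by fastforce
    then show ?thesis by (simp only: sum.empty)
  qed (use c_eq_0 c_def in simp)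
qed

lemma linear_coeff_eq_0_if_poly_eq_0:
  fixes h :: "'i set \<Rightarrow> complex"
  assumes "finite I" and "\<And>s::real. (\<Sum>J\<in>Pow I. complex_of_real s ^ card J * h J) = 0"
  shows "(\<Sum>i\<in>I. h {i}) = 0"
proof -
  have "{J\<in>Pow I. card J = 1} = (\<lambda>i. {i}) ` I" by (auto simp: card_1_singleton_iff)
  then have "(\<Sum>J\<in>{J\<in>Pow I. card J = 1}. h J) = (\<Sum>i\<in>I. h {i})"
    by (simp add: sum.reindex inj_on_def)
  moreover have "(\<Sum>J\<in>{J\<in>Pow I. card J = 1}. h J) = 0"
    using assms by (intro sum_coeffs_eq_0_if_poly_eq_0) auto
  ultimately show ?thesis by simp
qed

lemma sum_Pow_Times_card_eq_1:
  fixes g :: "'i set \<times> 'j set \<Rightarrow> 'a::comm_monoid_add"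
  assumes fin: "finite I" "finite J"
  shows "(\<Sum>x\<in>{x\<in>Pow I \<times> Pow J. card (fst x) + card (snd x) = 1}. g x)
    = (\<Sum>i\<in>I. g ({i}, {})) + (\<Sum>j\<in>J. g ({}, {j}))"
proof -
  have degree_one: "{x\<in>Pow I \<times> Pow J. card (fst x) + card (snd x) = 1}
      = (\<lambda>i. ({i}, {})) ` I \<union> (\<lambda>j. ({}, {j})) ` J"
  proof (intro equalityI subsetI)
    fix x assume "x \<in> {x\<in>Pow I \<times> Pow J. card (fst x) + card (snd x) = 1}"
    moreover have "finite (fst x)" "finite (snd x)" if "x \<in> Pow I \<times> Pow J"
      using that fin finite_subset by auto
    ultimately show "x \<in> (\<lambda>i. ({i}, {})) ` I \<union> (\<lambda>j. ({}, {j})) ` J"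
      by (cases x) (auto simp: add_is_1 card_1_singleton_iff)
  qed auto
  show ?thesis
    unfolding degree_one using fin by (subst sum.union_disjoint) (auto simp: sum.reindex inj_on_def)
qed

text \<open>Substituting \<open>z = s\<close> and \<open>z = \<i> s\<close> for real \<open>s\<close> separates the two coefficients.\<close>

lemma linear_coeffs_eq_0_if_poly_z_cnj_eq_0:
  fixes h :: "'i set \<times> 'j set \<Rightarrow> complex"
  assumes fin: "finite I" "finite J"
    and vanish: "\<And>z. (\<Sum>x\<in>Pow I \<times> Pow J. z ^ card (fst x) * cnj z ^ card (snd x) * h x) = 0"
  shows "(\<Sum>i\<in>I. h ({i}, {})) = 0" and "(\<Sum>j\<in>J. h ({}, {j})) = 0"
proof -
  define X where "X = (\<Sum>i\<in>I. h ({i}, {}))"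
  define Y where "Y = (\<Sum>j\<in>J. h ({}, {j}))"
  have fin_Pow: "finite (Pow I \<times> Pow J)" using fin by auto
  have "(\<Sum>x\<in>{x\<in>Pow I \<times> Pow J. card (fst x) + card (snd x) = 1}. h x) = 0"
  proof (rule sum_coeffs_eq_0_if_poly_eq_0[OF fin_Pow])
    fix s :: real
    show "(\<Sum>x\<in>Pow I \<times> Pow J. complex_of_real s ^ (card (fst x) + card (snd x)) * h x) = 0"
      using vanish[of "complex_of_real s"] by (simp add: power_add)
  qed
  then have "X + Y = 0"
    unfolding sum_Pow_Times_card_eq_1[OF fin, of h] X_def Y_def .
  have "(\<Sum>x\<in>{x\<in>Pow I \<times> Pow J. card (fst x) + card (snd x) = 1}. \<i> ^ card (fst x) * (- \<i>) ^ card (snd x) * h x) = 0"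
  proof (rule sum_coeffs_eq_0_if_poly_eq_0[OF fin_Pow])
    fix s :: real
    show "(\<Sum>x\<in>Pow I \<times> Pow J. complex_of_real s ^ (card (fst x) + card (snd x)) * (\<i> ^ card (fst x) * (- \<i>) ^ card (snd x) * h x)) = 0"
      using vanish[of "\<i> * complex_of_real s"]
      by (simp add: power_add power_mult_distrib power_minus[of \<i>] power_minus[of "\<i> * complex_of_real s"] mult_ac)
  qed
  then have "\<i> * (X - Y) = 0"
    unfolding sum_Pow_Times_card_eq_1[OF fin] X_def Y_def by (simp add: sum_distrib_left right_diff_distrib sum_negf)
  then have "X - Y = 0" by simp
  with \<open>X + Y = 0\<close> show "X = 0" "Y = 0"
    by (simp_all add: eq_neg_iff_add_eq_0[symmetric])
qed

lemma expand_multilinear: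
  fixes \<Phi> :: "(nat \<Rightarrow> 'v) \<Rightarrow> complex" and f :: "'v \<Rightarrow> 'v \<Rightarrow> 'v"
  assumes lin: "\<And>w i p q. i \<in> I0 \<Longrightarrow> \<Phi> (w(i := f p q)) = \<Phi> (w(i := p)) + \<zeta> * \<Phi> (w(i := q))"
    and "finite I" and "I \<subseteq> I0"
  shows "\<Phi> (\<lambda>i. if i \<in> I then f u x else w i)
      = (\<Sum>J\<in>Pow I. \<zeta> ^ card J * \<Phi> (\<lambda>i. if i \<in> J then x else if i \<in> I then u else w i))"
  using \<open>finite I\<close> \<open>I \<subseteq> I0\<close>
proof (induction I arbitrary: w rule: finite_induct)
  case (insert i I)
  let ?pat = "\<lambda>J I k. if k \<in> J then x else if k \<in> I then u else w k"
  have split: "\<Phi> (\<lambda>k. if k \<in> J then x else if k \<in> I then u else (w(i := f u x)) k)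
      = \<Phi> (?pat J (insert i I)) + \<zeta> * \<Phi> (?pat (insert i J) (insert i I))" if "J \<subseteq> I" for J
  proof -
    let ?g = "\<lambda>k. if k \<in> J then x else if k \<in> I then u else w k"
    have "(\<lambda>k. if k \<in> J then x else if k \<in> I then u else (w(i := f u x)) k) = ?g(i := f u x)"
      "?g(i := u) = ?pat J (insert i I)" "?g(i := x) = ?pat (insert i J) (insert i I)"
      using that insert(2) by (auto simp: fun_eq_iff)
    then show ?thesis using lin[of i ?g u x] insert(4) by simp
  qed
  have card_insert: "card (insert i J) = Suc (card J)" if "J \<in> Pow I" for J
    using that insert(1,2) finite_subset by (subst card_insert_disjoint) auto
  have "\<Phi> (\<lambda>k. if k \<in> insert i I then f u x else w k) = \<Phi> (\<lambda>k. if k \<in> I then f u x else (w(i := f u x)) k)"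
    by (intro arg_cong[where f=\<Phi>]) auto
  also have "\<dots> = (\<Sum>J\<in>Pow I. \<zeta> ^ card J * \<Phi> (?pat J (insert i I)))
      + (\<Sum>J\<in>Pow I. \<zeta> ^ card (insert i J) * \<Phi> (?pat (insert i J) (insert i I)))"
    using insert by (simp add: split card_insert sum.distrib algebra_simps)
  also have "\<dots> = (\<Sum>J\<in>Pow (insert i I). \<zeta> ^ card J * \<Phi> (?pat J (insert i I)))"
  proof -
    have "inj_on (insert i) (Pow I)" using insert(2) by (auto simp: inj_on_def)
    then show ?thesis
      unfolding Pow_insert using insert(1,2) by (subst sum.union_disjoint) (auto simp: sum.reindex)
  qed
  finally show ?case .
qed simp

lemma transpose_singleton_pattern:
  assumes "r \<in> I" "j \<in> I"
  shows "(\<lambda>i. if i \<in> {j} then x else if i \<in> I then u else w i) \<circ> Transposition.transpose r j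
       = (\<lambda>i. if i \<in> {r} then x else if i \<in> I then u else w i)"
  using assms by (auto simp: fun_eq_iff Transposition.transpose_def)

text \<open>\<open>H a A b B\<close> is a functional of the vectors \<open>A 0, \<dots>, A (a - 1)\<close> and
  \<open>B 0, \<dots>, B (b - 1)\<close>, and \<open>comb p z q\<close> plays the role of \<open>p + z q\<close>.\<close>

locale symmetric_sesquilinear =
  fixes H :: "nat \<Rightarrow> (nat \<Rightarrow> 'v) \<Rightarrow> nat \<Rightarrow> (nat \<Rightarrow> 'v) \<Rightarrow> complex"
    and comb :: "'v \<Rightarrow> complex \<Rightarrow> 'v \<Rightarrow> 'v"
  assumes linear_left:
      "i < a \<Longrightarrow> H a (A(i := comb p z q)) b B = H a (A(i := p)) b B + z * H a (A(i := q)) b B"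
    and antilinear_right:
      "i < b \<Longrightarrow> H a A b (B(i := comb p z q)) = H a A b (B(i := p)) + cnj z * H a A b (B(i := q))"
    and permute_left: "\<sigma> permutes {..<a} \<Longrightarrow> H a (A \<circ> \<sigma>) b B = H a A b B"
    and permute_right: "\<sigma> permutes {..<b} \<Longrightarrow> H a A b (B \<circ> \<sigma>) = H a A b B"
    and cong: "(\<And>i. i < a \<Longrightarrow> A i = A' i) \<Longrightarrow> (\<And>i. i < b \<Longrightarrow> B i = B' i) \<Longrightarrow> H a A b B = H a A' b B'"
begin

lemma expand_left:
  assumes "I \<subseteq> {..<a}"
  shows "H a (\<lambda>i. if i \<in> I then comb u z x else A i) b B
    = (\<Sum>J\<in>Pow I. z ^ card J * H a (\<lambda>i. if i \<in> J then x else if i \<in> I then u else A i) b B)"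
proof -
  have "\<And>w i p q. i \<in> {..<a} \<Longrightarrow> H a (w(i := comb p z q)) b B = H a (w(i := p)) b B + z * H a (w(i := q)) b B"
    by (simp add: linear_left)
  then show ?thesis
    by (rule expand_multilinear[where \<Phi>="\<lambda>A. H a A b B" and f="\<lambda>p. comb p z", OF _ _ assms])
      (use assms finite_subset in auto)
qed

lemma expand_right:
  assumes "I \<subseteq> {..<b}"
  shows "H a A b (\<lambda>i. if i \<in> I then comb u z x else B i)
    = (\<Sum>J\<in>Pow I. cnj z ^ card J * H a A b (\<lambda>i. if i \<in> J then x else if i \<in> I then u else B i))"
proof -
  have "\<And>w i p q. i \<in> {..<b} \<Longrightarrow> H a A b (w(i := comb p z q)) = H a A b (w(i := p)) + cnj z * H a A b (w(i := q))"
    by (simp add: antilinear_right)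
  then show ?thesis
    by (rule expand_multilinear[where \<Phi>="\<lambda>B. H a A b B" and f="\<lambda>p. comb p z", OF _ _ assms])
      (use assms finite_subset in auto)
qed

lemma sum_singleton_left:
  assumes "I \<subseteq> {..<a}" "r \<in> I"
  shows "(\<Sum>j\<in>I. H a (\<lambda>i. if i \<in> {j} then x else if i \<in> I then u else A i) b B)
    = of_nat (card I) * H a (\<lambda>i. if i \<in> {r} then x else if i \<in> I then u else A i) b B"
proof -
  let ?P = "\<lambda>J i. if i \<in> J then x else if i \<in> I then u else A i"
  have "H a (?P {j}) b B = H a (?P {r}) b B" if "j \<in> I" for j
  proof -
    have "Transposition.transpose r j permutes {..<a}"
      using assms that by (intro permutes_swap_id) auto
    then have "H a (?P {r}) b B = H a (?P {j} \<circ> Transposition.transpose r j) b B"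
      using assms that by (simp only: transpose_singleton_pattern)
    also have "\<dots> = H a (?P {j}) b B"
      by (rule permute_left) fact
    finally show ?thesis ..
  qed
  then show ?thesis by simp
qed

lemma sum_singleton_right:
  assumes "I \<subseteq> {..<b}" "r \<in> I"
  shows "(\<Sum>j\<in>I. H a A b (\<lambda>i. if i \<in> {j} then x else if i \<in> I then u else B i))
    = of_nat (card I) * H a A b (\<lambda>i. if i \<in> {r} then x else if i \<in> I then u else B i)"
proof -
  let ?P = "\<lambda>J i. if i \<in> J then x else if i \<in> I then u else B i"
  have "H a A b (?P {j}) = H a A b (?P {r})" if "j \<in> I" for j
  proof -
    have "Transposition.transpose r j permutes {..<b}"
      using assms that by (intro permutes_swap_id) auto
    then have "H a A b (?P {r}) = H a A b (?P {j} \<circ> Transposition.transpose r j)"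
      using assms that by (simp only: transpose_singleton_pattern)
    also have "\<dots> = H a A b (?P {j})"
      by (rule permute_right) fact
    finally show ?thesis ..
  qed
  then show ?thesis by simp
qed

lemma expand_left_right:
  assumes "I \<subseteq> {..<a}"
  shows "H a (\<lambda>i. if i \<in> I then comb u z x else A i) b (\<lambda>i. if i \<in> {..<b} then comb u z x else u)
    = (\<Sum>JK\<in>Pow I \<times> Pow {..<b}. z ^ card (fst JK) * cnj z ^ card (snd JK)
        * H a (\<lambda>i. if i \<in> fst JK then x else if i \<in> I then u else A i)
            b (\<lambda>i. if i \<in> snd JK then x else if i \<in> {..<b} then u else u))"
proof -
  let ?A = "\<lambda>J i. if i \<in> J then x else if i \<in> I then u else A i"
  let ?B = "\<lambda>K i. if i \<in> K then x else if i \<in> {..<b} then u else u"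
  have "H a (\<lambda>i. if i \<in> I then comb u z x else A i) b (\<lambda>i. if i \<in> {..<b} then comb u z x else u)
      = (\<Sum>J\<in>Pow I. z ^ card J * H a (?A J) b (\<lambda>i. if i \<in> {..<b} then comb u z x else u))"
    by (rule expand_left) fact
  also have "\<dots> = (\<Sum>J\<in>Pow I. z ^ card J * (\<Sum>K\<in>Pow {..<b}. cnj z ^ card K * H a (?A J) b (?B K)))"
    by (intro sum.cong refl arg_cong2[where f="(*)"] expand_right) auto
  also have "\<dots> = (\<Sum>J\<in>Pow I. \<Sum>K\<in>Pow {..<b}. z ^ card J * cnj z ^ card K * H a (?A J) b (?B K))"
    by (simp add: sum_distrib_left mult.assoc)
  also have "\<dots> = (\<Sum>JK\<in>Pow I \<times> Pow {..<b}. z ^ card (fst JK) * cnj z ^ card (snd JK) * H a (?A (fst JK)) b (?B (snd JK)))"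
    by (subst sum.cartesian_product) (simp add: case_prod_beta)
  finally show ?thesis .
qed

context
  assumes diagonal: "\<And>a b u. H a (\<lambda>_. u) b (\<lambda>_. u) = 0"
begin

text \<open>Induction on \<open>r\<close>: replacing \<open>A r, \<dots>, A (a - 1)\<close> and all of \<open>B\<close> by \<open>comb u z (A r)\<close>
  gives \<open>0\<close>, and in the expansion of this in \<open>z\<close> and \<open>cnj z\<close> the coefficient of \<open>z\<close> is
  \<open>card {r..<a}\<close> times \<open>H a A b (\<lambda>_. u)\<close>.\<close>

lemma eq_0_if_right_const:
  assumes "\<And>i. r \<le> i \<Longrightarrow> i < a \<Longrightarrow> A i = u"
  shows "H a A b (\<lambda>_. u) = 0"
  using assms
proof (induction r arbitrary: A u)
  case 0
  then have "H a A b (\<lambda>_. u) = H a (\<lambda>_. u) b (\<lambda>_. u)"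
    by (intro cong) auto
  then show ?case by (simp add: diagonal)
next
  case (Suc r)
  show ?case
  proof (cases "r < a")
    case False
    then show ?thesis by (intro Suc.IH) (use Suc.prems in auto)
  next
    case True
    define x where "x = A r"
    define I where "I = {r..<a}"
    define h where "h JK = H a (\<lambda>i. if i \<in> fst JK then x else if i \<in> I then u else A i)
      b (\<lambda>i. if i \<in> snd JK then x else if i \<in> {..<b} then u else u)" for JK
    have poly_eq_0: "(\<Sum>JK\<in>Pow I \<times> Pow {..<b}. z ^ card (fst JK) * cnj z ^ card (snd JK) * h JK) = 0" for z
    proof -
      have "0 = H a (\<lambda>i. if i \<in> I then comb u z x else A i) b (\<lambda>_. comb u z x)"
        by (rule Suc.IH[symmetric]) (auto simp: I_def)
      also have "\<dots> = H a (\<lambda>i. if i \<in> I then comb u z x else A i) b (\<lambda>i. if i \<in> {..<b} then comb u z x else u)"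
        by (intro cong) auto
      also have "\<dots> = (\<Sum>JK\<in>Pow I \<times> Pow {..<b}. z ^ card (fst JK) * cnj z ^ card (snd JK) * h JK)"
        unfolding h_def by (rule expand_left_right) (auto simp: I_def)
      finally show ?thesis ..
    qed
    have "of_nat (card I) * h ({r}, {}) = (\<Sum>j\<in>I. h ({j}, {}))"
      unfolding h_def prod.sel using True by (intro sum_singleton_left[symmetric]) (auto simp: I_def)
    also have "\<dots> = 0"
      by (rule linear_coeffs_eq_0_if_poly_z_cnj_eq_0(1)[OF _ _ poly_eq_0]) (simp_all add: I_def)
    finally have "h ({r}, {}) = 0"
      using True by (simp add: I_def)
    moreover have "h ({r}, {}) = H a A b (\<lambda>_. u)"
      unfolding h_def using Suc.prems by (intro cong) (auto simp: I_def x_def)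
    ultimately show ?thesis by simp
  qed
qed

lemma eq_0_if_right_tail_const:
  assumes "\<And>i. r \<le> i \<Longrightarrow> i < b \<Longrightarrow> B i = u"
  shows "H a A b B = 0"
  using assms
proof (induction r arbitrary: B u)
  case 0
  then have "H a A b B = H a A b (\<lambda>_. u)"
    by (intro cong) auto
  also have "\<dots> = 0"
    by (rule eq_0_if_right_const[of a]) simp
  finally show ?case .
next
  case (Suc r)
  show ?case
  proof (cases "r < b")
    case False
    then show ?thesis by (intro Suc.IH) (use Suc.prems in auto)
  next
    case True
    define x where "x = B r"
    define I where "I = {r..<b}"
    define h where "h K = H a A b (\<lambda>i. if i \<in> K then x else if i \<in> I then u else B i)" for K
    have "(\<Sum>K\<in>Pow I. complex_of_real s ^ card K * h K) = 0" for s
    proof -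
      have "0 = H a A b (\<lambda>i. if i \<in> I then comb u (complex_of_real s) x else B i)"
        by (rule Suc.IH[symmetric]) (auto simp: I_def)
      also have "\<dots> = (\<Sum>K\<in>Pow I. cnj (complex_of_real s) ^ card K * h K)"
        unfolding h_def by (rule expand_right) (auto simp: I_def)
      finally show ?thesis by simp
    qed
    then have "(\<Sum>k\<in>I. h {k}) = 0"
      by (rule linear_coeff_eq_0_if_poly_eq_0[rotated]) (simp add: I_def)
    then have "h {r} = 0"
      unfolding h_def using True by (subst (asm) sum_singleton_right) (auto simp: I_def)
    moreover have "h {r} = H a A b B"
      unfolding h_def using Suc.prems by (intro cong) (auto simp: I_def x_def)
    ultimately show ?thesis by simp
  qed
qed

lemma eq_0: "H a A b B = 0"
  by (rule eq_0_if_right_tail_const[where r=b and u="B 0"]) simp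

end

end

lemma sum_cis_roots_of_unity:
  fixes N :: nat and d :: int
  assumes N: "N > 0" and d: "\<bar>d\<bar> < int N"
  shows "(\<Sum>m<N. cis (2 * pi * of_int d * real m / real N)) = (if d = 0 then of_nat N else 0)"
proof (cases "d = 0")
  case False
  define w where "w = cis (2 * pi * of_int d / real N)"
  have w_ne_1: "w \<noteq> 1"
  proof
    assume "w = 1"
    then obtain n :: int where "2 * pi * of_int d / real N = of_int (2 * n) * pi"
      unfolding w_def cis_conv_exp exp_eq_1 by auto
    then have "d = int N * n"
      using N by (simp add: field_simps) (metis of_int_eq_iff of_int_mult of_int_of_nat_eq)
    with False d show False
      by (cases "n = 0") (auto simp: abs_mult mult_le_cancel_left1)
  qed
  have "w ^ N = cis (2 * pi * of_int d)"
    using N unfolding w_def Complex.DeMoivre by simp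
  also have "\<dots> = 1" by (rule cis_multiple_2pi) simp
  finally have "w ^ N = 1" .
  have "cis (2 * pi * of_int d * real m / real N) = w ^ m" for m
    unfolding w_def Complex.DeMoivre by (simp add: algebra_simps)
  then have "(\<Sum>m<N. cis (2 * pi * of_int d * real m / real N)) = (\<Sum>m<N. w ^ m)"
    by simp
  also have "\<dots> = 0"
    using geometric_sum[OF w_ne_1, of N] \<open>w ^ N = 1\<close> by simp
  finally show ?thesis using False by simp
qed simp

text \<open>The coefficients are read off by averaging over the \<open>(2k + 1)\<close>-th roots of unity.\<close>

lemma constant_trig_poly_coeff:
  fixes e :: "nat \<Rightarrow> complex"
  assumes const: "\<And>\<theta>. (\<Sum>j\<le>k. e j * cis ((2 * real j - real k) * \<theta>)) = K" and "j0 \<le> k"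
  shows "e j0 = (if 2 * j0 = k then K else 0)"
proof -
  define N where "N = 2 * k + 1"
  have N: "N > 0" unfolding N_def by simp
  define th where "th m = 2 * pi * real m / real N" for m :: nat
  have "(\<Sum>m<N. cis (- (2 * real j0 - real k) * th m) * K)
      = (\<Sum>m<N. \<Sum>j\<le>k. e j * cis (2 * pi * of_int (2 * (int j - int j0)) * real m / real N))"
  proof (rule sum.cong[OF refl])
    fix m
    have "cis (- (2 * real j0 - real k) * th m) * K
       = (\<Sum>j\<le>k. e j * (cis ((2 * real j - real k) * th m) * cis (- (2 * real j0 - real k) * th m)))"
      unfolding const[of "th m", symmetric] by (simp add: sum_distrib_left mult_ac)
    also have "\<dots> = (\<Sum>j\<le>k. e j * cis (2 * pi * of_int (2 * (int j - int j0)) * real m / real N))"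
      unfolding cis_mult th_def
      by (intro sum.cong refl arg_cong2[where f="(*)"] arg_cong[where f=cis]) (use N in \<open>simp add: field_simps\<close>)
    finally show "cis (- (2 * real j0 - real k) * th m) * K = \<dots>" .
  qed
  also have "\<dots> = (\<Sum>j\<le>k. e j * (\<Sum>m<N. cis (2 * pi * of_int (2 * (int j - int j0)) * real m / real N)))"
    by (subst sum.swap) (simp add: sum_distrib_left)
  also have "\<dots> = (\<Sum>j\<le>k. if j = j0 then e j * of_nat N else 0)"
    using \<open>j0 \<le> k\<close> by (intro sum.cong refl) (subst sum_cis_roots_of_unity[OF N], auto simp: N_def)
  also have "\<dots> = e j0 * of_nat N" using \<open>j0 \<le> k\<close> by simp
  finally have "e j0 * of_nat N = (\<Sum>m<N. cis (- (2 * real j0 - real k) * th m) * K)" ..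
  also have "\<dots> = K * (\<Sum>m<N. cis (2 * pi * of_int (int k - 2 * int j0) * real m / real N))"
    unfolding th_def by (simp add: sum_distrib_left algebra_simps)
  also have "\<dots> = K * (if 2 * j0 = k then of_nat N else 0)"
    using \<open>j0 \<le> k\<close> by (subst sum_cis_roots_of_unity[OF N]) (auto simp: N_def)
  finally show ?thesis using N by (cases "2 * j0 = k") auto
qed

lemma prod_fun_upd:
  assumes "finite S" "i \<in> S"
  shows "(\<Prod>k\<in>S. g k ((A(i := v)) k)) = g i v * (\<Prod>k\<in>S - {i}. g k (A k))"
proof -
  have "(\<Prod>k\<in>S - {i}. g k ((A(i := v)) k)) = (\<Prod>k\<in>S - {i}. g k (A k))"
    by (intro prod.cong) auto
  then show ?thesis using assms by (simp add: prod.remove)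
qed

lemma prod_permutes_inv:
  assumes "\<pi> permutes {..<a}"
  shows "(\<Prod>k<a. f (\<pi> k) k) = (\<Prod>j<a. f j (inv \<pi> j))"
  using prod.permute[OF assms, of "\<lambda>j. f j (inv \<pi> j)"] permutes_inverses(2)[OF assms] by simp

lemma sum_balanced_reindex:
  fixes g :: "nat \<Rightarrow> nat \<Rightarrow> nat \<Rightarrow> nat \<Rightarrow> 'a::comm_monoid_add" and T :: "nat \<Rightarrow> nat \<Rightarrow> nat \<Rightarrow> 'a"
  assumes unbalanced: "\<And>i j a b. i + b \<noteq> a + j \<Longrightarrow> g i j a b = 0"
    and balanced: "\<And>i j a b. i + b = a + j \<Longrightarrow> g i j a b = T (i + b) i j"
    and vanish: "\<And>t i j. m < i \<or> m < j \<or> n + i < t \<or> n + j < t \<Longrightarrow> T t i j = 0"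
  shows "(\<Sum>i\<le>m. \<Sum>j\<le>m. \<Sum>b\<le>n. \<Sum>a\<le>n. g i j a b) = (\<Sum>t\<le>m + n. \<Sum>i\<le>t. \<Sum>j\<le>t. T t i j)"
proof -
  define F where "F i b = (\<Sum>j\<le>i + b. T (i + b) i j)" for i b
  have sum_a: "(\<Sum>a\<le>n. g i j a b) = (if j \<le> i + b then T (i + b) i j else 0)" for i j b
  proof -
    have "(\<Sum>a\<le>n. g i j a b) = (\<Sum>a\<le>n. if j \<le> i + b \<and> a = i + b - j then T (i + b) i j else 0)"
      using unbalanced balanced by (intro sum.cong) auto
    also have "\<dots> = (if j \<le> i + b then T (i + b) i j else 0)"
    proof (cases "i + b - j \<le> n")
      case False
      then have "T (i + b) i j = 0" by (intro vanish) linarith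
      then show ?thesis by simp
    qed (simp add: sum.delta')
    finally show ?thesis .
  qed
  have sum_j: "(\<Sum>j\<le>m. if j \<le> i + b then T (i + b) i j else 0) = F i b" for i b
  proof -
    have "(\<Sum>j\<le>m. if j \<le> i + b then T (i + b) i j else 0) = (\<Sum>j\<in>{..m} \<inter> {..i + b}. T (i + b) i j)"
      by (simp only: sum.inter_restrict[OF finite_atMost] atMost_iff)
    also have "\<dots> = F i b"
      unfolding F_def by (intro sum.mono_neutral_left) (auto intro: vanish)
    finally show ?thesis .
  qed
  have "(\<Sum>i\<le>m. \<Sum>j\<le>m. \<Sum>b\<le>n. \<Sum>a\<le>n. g i j a b) = (\<Sum>(i, b)\<in>{..m} \<times> {..n}. F i b)"
    unfolding sum.cartesian_product[symmetric] sum_a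
    by (subst sum.swap) (simp add: sum_j)
  also have "\<dots> = (\<Sum>(i, b)\<in>{(i, b). i + b \<le> m + n}. F i b)"
  proof (rule sum.mono_neutral_left)
    show "finite {(i, b). i + b \<le> m + n}"
      by (rule finite_subset[of _ "{..m + n} \<times> {..m + n}"]) auto
  qed (auto simp: F_def intro!: sum.neutral vanish)
  also have "\<dots> = (\<Sum>t\<le>m + n. \<Sum>i\<le>t. \<Sum>j\<le>t. T t i j)"
    unfolding sum.triangle_reindex_eq F_def by simp
  finally show ?thesis .
qed

lemma power_product_binomial_expansion:
  fixes x y mx my :: complex
  shows "((mx + x) * cnj (my + y)) ^ m * cnj (((mx + x) * cnj (my + y)) ^ n)
    = (\<Sum>i\<le>m. \<Sum>j\<le>m. \<Sum>b\<le>n. \<Sum>a\<le>n.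
        of_nat ((m choose i) * (m choose j) * (n choose a) * (n choose b))
        * mx ^ (m - i) * cnj my ^ (m - j) * cnj mx ^ (n - a) * my ^ (n - b)
        * (x ^ i * cnj y ^ j * cnj x ^ a * y ^ b))"
proof -
  have "((mx + x) * cnj (my + y)) ^ m * cnj (((mx + x) * cnj (my + y)) ^ n)
      = (x + mx) ^ m * ((cnj y + cnj my) ^ m * ((y + my) ^ n * (cnj x + cnj mx) ^ n))"
    by (simp add: power_mult_distrib add.commute mult_ac)
  also have "\<dots> = (\<Sum>i\<le>m. of_nat (m choose i) * x ^ i * mx ^ (m - i)) *
      ((\<Sum>j\<le>m. of_nat (m choose j) * cnj y ^ j * cnj my ^ (m - j)) *
      ((\<Sum>b\<le>n. of_nat (n choose b) * y ^ b * my ^ (n - b)) *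
       (\<Sum>a\<le>n. of_nat (n choose a) * cnj x ^ a * cnj mx ^ (n - a))))"
    by (simp only: binomial_ring)
  also have "\<dots> = (\<Sum>i\<le>m. \<Sum>j\<le>m. \<Sum>b\<le>n. \<Sum>a\<le>n.
        of_nat ((m choose i) * (m choose j) * (n choose a) * (n choose b))
        * mx ^ (m - i) * cnj my ^ (m - j) * cnj mx ^ (n - a) * my ^ (n - b)
        * (x ^ i * cnj y ^ j * cnj x ^ a * y ^ b))"
    by (simp only: sum_distrib_right, simp only: sum_distrib_left) (intro sum.cong refl, simp add: mult_ac)
  finally show ?thesis .
qed

lemma prod_lessThan_split:
  fixes x y :: "'a::comm_monoid_mult"
  shows "(\<Prod>k<i + b. if k < i then x else y) = x ^ i * y ^ b"
proof (induction b)
  case 0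
  have "(\<Prod>k<i. if k < i then x else y) = (\<Prod>k<i. x)" by (intro prod.cong) auto
  then show ?case by simp
next
  case (Suc b)
  then show ?case by (simp add: mult_ac)
qed

section \<open>A jointly circularly-symmetric Gaussian pair\<close>

lemma borel_measurable_cnj [measurable (raw)]:
  "f \<in> borel_measurable M \<Longrightarrow> (\<lambda>x. cnj (f x :: complex)) \<in> borel_measurable M"
  by (rule borel_measurable_continuous_on[where f=cnj]) (rule linear_continuous_on[OF bounded_linear_cnj])

lemma power_sum4_le:
  fixes a b c d :: real
  assumes "a \<ge> 0" "b \<ge> 0" "c \<ge> 0" "d \<ge> 0"
  shows "(a + b + c + d) ^ n \<le> 4 ^ n * (a ^ n + b ^ n + c ^ n + d ^ n)"
proof -
  define m where "m = max (max a b) (max c d)"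
  have "(a + b + c + d) ^ n \<le> (4 * m) ^ n"
    using assms by (intro power_mono) (auto simp: m_def)
  also have "m ^ n \<le> a ^ n + b ^ n + c ^ n + d ^ n"
    using assms by (auto simp: m_def max_def)
  then have "(4 * m) ^ n \<le> 4 ^ n * (a ^ n + b ^ n + c ^ n + d ^ n)"
    by (simp add: power_mult_distrib)
  finally show ?thesis .
qed

definition add_scaled :: "complex \<times> complex \<Rightarrow> complex \<Rightarrow> complex \<times> complex \<Rightarrow> complex \<times> complex" where
  "add_scaled p z q = (fst p + z * fst q, snd p + z * snd q)"

text \<open>\<open>lin (split_vec i k)\<close> is entry \<open>k\<close> of the list \<open>A\<^sub>t\<^sub>,\<^sub>i\<close>; \<open>(1, 0)\<close> and \<open>(0, 1)\<close> stand for
  \<open>VX\<close> and \<open>VY\<close>.\<close>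

definition split_vec :: "nat \<Rightarrow> nat \<Rightarrow> complex \<times> complex" where
  "split_vec i k = (if k < i then (1, 0) else (0, 1))"

locale cscg_pair = prob_space M
  for M :: "'a measure" and VX VY :: "'a \<Rightarrow> complex" and sX sY :: real and rho :: complex +
  assumes sX_pos: "sX > 0" and sY_pos: "sY > 0" and norm_rho_le_1: "cmod rho \<le> 1"
    and jointly_cscg: "jointly_cscg M VX VY sX sY rho"
begin

lemma borel_measurable_VX [measurable]: "VX \<in> borel_measurable M"
  and borel_measurable_VY [measurable]: "VY \<in> borel_measurable M"
  using jointly_cscg unfolding jointly_cscg_def by auto

definition lin :: "complex \<times> complex \<Rightarrow> 'a \<Rightarrow> complex" where
  "lin u \<omega> = fst u * VX \<omega> + snd u * VY \<omega>"

text \<open>By the characteristic function in \<open>jointly_cscg\<close>, \<open>lin_var u\<close> is \<open>E|lin u|\<^sup>2\<close> and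
  \<open>cov u w\<close> below is \<open>E[lin u cnj (lin w)]\<close>.\<close>

definition lin_var :: "complex \<times> complex \<Rightarrow> real" where
  "lin_var u = (cmod (fst u))\<^sup>2 * sX\<^sup>2 + (cmod (snd u))\<^sup>2 * sY\<^sup>2
     + 2 * Re (fst u * cnj (snd u) * rho) * sX * sY"

lemma borel_measurable_lin [measurable]: "lin u \<in> borel_measurable M"
  unfolding lin_def by measurable

lemma lin_var_nonneg: "lin_var u \<ge> 0"
proof -
  have "\<bar>Re (fst u * cnj (snd u) * rho)\<bar> \<le> cmod (fst u) * cmod (snd u) * cmod rho"
    using abs_Re_le_cmod[of "fst u * cnj (snd u) * rho"] by (simp add: norm_mult)
  also have "\<dots> \<le> cmod (fst u) * cmod (snd u)"
    using norm_rho_le_1 by (simp add: mult_left_le)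
  finally have "- (cmod (fst u) * cmod (snd u)) * (sX * sY) \<le> Re (fst u * cnj (snd u) * rho) * (sX * sY)"
    using sX_pos sY_pos by (intro mult_right_mono) auto
  moreover have "0 \<le> (cmod (fst u) * sX - cmod (snd u) * sY)\<^sup>2" by simp
  ultimately show ?thesis
    unfolding lin_var_def by (simp add: power2_eq_square algebra_simps)
qed

lemma char_Re_lin:
  "(CLINT \<omega>|M. iexp (s * Re (lin u \<omega>))) = exp (- (s * sqrt (lin_var u / 2))\<^sup>2 / 2)"
proof -
  let ?a = "cnj (of_real s * fst u)" and ?b = "cnj (of_real s * snd u)"
  have "(LINT \<omega>|M. cis (Re (cnj ?a * VX \<omega> + cnj ?b * VY \<omega>))) =
      exp (- ((cmod ?a)\<^sup>2 * sX\<^sup>2 + (cmod ?b)\<^sup>2 * sY\<^sup>2 + 2 * Re (cnj ?a * ?b * rho) * sX * sY) / 4)"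
    using jointly_cscg unfolding jointly_cscg_def by blast
  moreover have "cis (Re (cnj ?a * VX \<omega> + cnj ?b * VY \<omega>)) = iexp (s * Re (lin u \<omega>))" for \<omega>
    by (simp add: lin_def cis_conv_exp algebra_simps)
  moreover have "(cmod ?a)\<^sup>2 * sX\<^sup>2 + (cmod ?b)\<^sup>2 * sY\<^sup>2 + 2 * Re (cnj ?a * ?b * rho) * sX * sY
      = s\<^sup>2 * lin_var u"
  proof -
    have Re_eq: "Re (cnj ?a * ?b * rho) = s\<^sup>2 * Re (fst u * cnj (snd u) * rho)"
      by (simp add: power2_eq_square algebra_simps)
    show ?thesis
      unfolding Re_eq lin_var_def by (simp add: norm_mult power_mult_distrib algebra_simps)
  qed
  moreover have "(s * sqrt (lin_var u / 2))\<^sup>2 = s\<^sup>2 * lin_var u / 2"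
    using lin_var_nonneg[of u] by (simp add: power_mult_distrib)
  ultimately show ?thesis by simp
qed

lemma integrable_Re_lin_power: "integrable M (\<lambda>\<omega>. Re (lin u \<omega>) ^ k)"
  and integral_Re_lin_power:
    "(LINT \<omega>|M. Re (lin u \<omega>) ^ k) = sqrt (lin_var u / 2) ^ k * (LINT x|std_normal_distribution. x ^ k)"
  by (rule integrable_normal_power integral_normal_power, rule prob_space_axioms, measurable, rule char_Re_lin)+

lemma integrable_norm_sum_power: "integrable M (\<lambda>\<omega>. (cmod (VX \<omega>) + cmod (VY \<omega>)) ^ n)"
proof -
  let ?x1 = "\<lambda>\<omega>. Re (lin (1, 0) \<omega>)" and ?x2 = "\<lambda>\<omega>. Re (lin (-\<i>, 0) \<omega>)"
  let ?y1 = "\<lambda>\<omega>. Re (lin (0, 1) \<omega>)" and ?y2 = "\<lambda>\<omega>. Re (lin (0, -\<i>) \<omega>)"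
  let ?bound = "\<lambda>\<omega>. 4 ^ n * (\<bar>?x1 \<omega>\<bar> ^ n + \<bar>?x2 \<omega>\<bar> ^ n + \<bar>?y1 \<omega>\<bar> ^ n + \<bar>?y2 \<omega>\<bar> ^ n)"
  have "integrable M (\<lambda>\<omega>. \<bar>Re (lin u \<omega>)\<bar> ^ n)" for u
    using integrable_abs[OF integrable_Re_lin_power[of u n]] by (simp add: power_abs)
  then have integrable_bound: "integrable M ?bound"
    by (auto intro!: integrable_mult_right integrable_add)
  have bound: "norm ((cmod (VX \<omega>) + cmod (VY \<omega>)) ^ n) \<le> norm (?bound \<omega>)" for \<omega>
  proof -
    have "cmod (VX \<omega>) + cmod (VY \<omega>) \<le> \<bar>?x1 \<omega>\<bar> + \<bar>?x2 \<omega>\<bar> + \<bar>?y1 \<omega>\<bar> + \<bar>?y2 \<omega>\<bar>"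
      using cmod_le[of "VX \<omega>"] cmod_le[of "VY \<omega>"] by (simp add: lin_def)
    then have "(cmod (VX \<omega>) + cmod (VY \<omega>)) ^ n \<le> (\<bar>?x1 \<omega>\<bar> + \<bar>?x2 \<omega>\<bar> + \<bar>?y1 \<omega>\<bar> + \<bar>?y2 \<omega>\<bar>) ^ n"
      by (intro power_mono) auto
    also have "\<dots> \<le> ?bound \<omega>"
      by (rule power_sum4_le) auto
    finally show ?thesis by simp
  qed
  show ?thesis
    by (rule Bochner_Integration.integrable_bound[OF integrable_bound]) (measurable, intro AE_I2 bound)
qed

definition mixed_prod :: "nat \<Rightarrow> (nat \<Rightarrow> complex \<times> complex) \<Rightarrow> nat \<Rightarrow> (nat \<Rightarrow> complex \<times> complex) \<Rightarrow> 'a \<Rightarrow> complex"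
  where "mixed_prod a A b B \<omega> = (\<Prod>k<a. lin (A k) \<omega>) * (\<Prod>k<b. cnj (lin (B k) \<omega>))"

definition moment :: "nat \<Rightarrow> (nat \<Rightarrow> complex \<times> complex) \<Rightarrow> nat \<Rightarrow> (nat \<Rightarrow> complex \<times> complex) \<Rightarrow> complex"
  where "moment a A b B = (LINT \<omega>|M. mixed_prod a A b B \<omega>)"

lemma borel_measurable_mixed_prod [measurable]: "mixed_prod a A b B \<in> borel_measurable M"
  unfolding mixed_prod_def by measurable

lemma integrable_mixed_prod: "integrable M (mixed_prod a A b B)"
proof -
  define nu where "nu u = cmod (fst u) + cmod (snd u)" for u :: "complex \<times> complex"
  define C where "C = (\<Prod>k<a. nu (A k)) * (\<Prod>k<b. nu (B k))"
  have nu_nonneg: "0 \<le> nu u" for u unfolding nu_def by simp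
  have norm_lin: "cmod (lin u \<omega>) \<le> nu u * (cmod (VX \<omega>) + cmod (VY \<omega>))" for u \<omega>
  proof -
    have "cmod (lin u \<omega>) \<le> cmod (fst u) * cmod (VX \<omega>) + cmod (snd u) * cmod (VY \<omega>)"
      unfolding lin_def by (metis norm_mult norm_triangle_ineq)
    also have "\<dots> \<le> nu u * (cmod (VX \<omega>) + cmod (VY \<omega>))"
      unfolding nu_def by (simp add: algebra_simps)
    finally show ?thesis .
  qed
  have "norm (mixed_prod a A b B \<omega>) \<le> norm (C * (cmod (VX \<omega>) + cmod (VY \<omega>)) ^ (a + b))" for \<omega>
  proof -
    let ?S = "cmod (VX \<omega>) + cmod (VY \<omega>)"
    have "cmod (mixed_prod a A b B \<omega>) = (\<Prod>k<a. cmod (lin (A k) \<omega>)) * (\<Prod>k<b. cmod (lin (B k) \<omega>))"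
      unfolding mixed_prod_def by (simp add: norm_mult prod_norm[symmetric])
    also have "\<dots> \<le> (\<Prod>k<a. nu (A k) * ?S) * (\<Prod>k<b. nu (B k) * ?S)"
      by (intro mult_mono prod_mono conjI norm_lin prod_nonneg) (auto simp: nu_nonneg)
    also have "\<dots> = C * ?S ^ (a + b)"
      unfolding C_def by (simp only: prod.distrib prod_constant power_add card_lessThan mult_ac)
    finally show ?thesis
      by (simp add: C_def nu_nonneg prod_nonneg)
  qed
  then show ?thesis
    by (intro Bochner_Integration.integrable_bound[OF integrable_mult_right[OF integrable_norm_sum_power]] AE_I2)
      auto
qed

lemma lin_scale: "lin (c * fst u, c * snd u) \<omega> = c * lin u \<omega>"
  unfolding lin_def by (simp add: algebra_simps)

lemma lin_var_rotate:
  assumes "cmod c = 1"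
  shows "lin_var (c * fst u, c * snd u) = lin_var u"
proof -
  have "c * fst u * cnj (c * snd u) * rho = (c * cnj c) * (fst u * cnj (snd u) * rho)"
    by (simp add: algebra_simps)
  also have "c * cnj c = 1"
    using assms by (simp add: complex_norm_square[symmetric])
  finally have "c * fst u * cnj (c * snd u) * rho = fst u * cnj (snd u) * rho"
    by simp
  then show ?thesis
    using assms unfolding lin_var_def by (simp only: fst_conv snd_conv norm_mult) simp
qed

lemma integrable_lin_power: "integrable M (\<lambda>\<omega>. lin u \<omega> ^ p * cnj (lin u \<omega>) ^ q)"
  using integrable_mixed_prod[of p "\<lambda>_. u" q "\<lambda>_. u"] unfolding mixed_prod_def by simp

lemma cis_power_mult_cnj_power:
  assumes "j \<le> k"
  shows "cis \<theta> ^ j * cnj (cis \<theta>) ^ (k - j) = cis ((2 * real j - real k) * \<theta>)"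
proof -
  have "cis \<theta> ^ j * cnj (cis \<theta>) ^ (k - j) = cis (real j * \<theta>) * cis (real (k - j) * (- \<theta>))"
    unfolding cis_cnj Complex.DeMoivre by simp
  also have "\<dots> = cis ((2 * real j - real k) * \<theta>)"
    unfolding cis_mult using assms by (simp add: of_nat_diff algebra_simps)
  finally show ?thesis .
qed

text \<open>All rotations \<open>Re (c lin u)\<close>, \<open>|c| = 1\<close>, have the same moments; expanding
  \<open>(2 Re (c lin u))\<^sup>k\<close> binomially turns this into a constant trigonometric polynomial in \<open>arg c\<close>.\<close>

lemma sum_rotated_lin_moments:
  "(\<Sum>j\<le>k. of_nat (k choose j) * (LINT \<omega>|M. lin u \<omega> ^ j * cnj (lin u \<omega>) ^ (k - j)) * cis ((2 * real j - real k) * \<theta>))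
    = complex_of_real (2 ^ k * (sqrt (lin_var u / 2) ^ k * (LINT x|std_normal_distribution. x ^ k)))"
proof -
  define c where "c = cis \<theta>"
  have expand: "complex_of_real ((2 * Re (c * lin u \<omega>)) ^ k) =
     (\<Sum>j\<le>k. cis ((2 * real j - real k) * \<theta>) * of_nat (k choose j) * (lin u \<omega> ^ j * cnj (lin u \<omega>) ^ (k - j)))" for \<omega>
  proof -
    have "complex_of_real ((2 * Re (c * lin u \<omega>)) ^ k) = (c * lin u \<omega> + cnj (c * lin u \<omega>)) ^ k"
      by (simp only: complex_add_cnj of_real_power)
    also have "\<dots> = (\<Sum>j\<le>k. of_nat (k choose j) * (c * lin u \<omega>) ^ j * cnj (c * lin u \<omega>) ^ (k - j))"
      by (rule binomial_ring)
    also have "\<dots> = (\<Sum>j\<le>k. (c ^ j * cnj c ^ (k - j)) * of_nat (k choose j) * (lin u \<omega> ^ j * cnj (lin u \<omega>) ^ (k - j)))"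
      by (simp add: power_mult_distrib algebra_simps)
    finally show ?thesis
      by (simp add: c_def cis_power_mult_cnj_power)
  qed
  have "(LINT \<omega>|M. (2 * Re (c * lin u \<omega>)) ^ k) = 2 ^ k * (LINT \<omega>|M. Re (lin (c * fst u, c * snd u) \<omega>) ^ k)"
    unfolding lin_scale power_mult_distrib by simp
  also have "\<dots> = 2 ^ k * (sqrt (lin_var u / 2) ^ k * (LINT x|std_normal_distribution. x ^ k))"
    unfolding integral_Re_lin_power lin_var_rotate[of c, unfolded c_def, simplified] c_def ..
  finally have "complex_of_real (2 ^ k * (sqrt (lin_var u / 2) ^ k * (LINT x|std_normal_distribution. x ^ k)))
      = complex_of_real (LINT \<omega>|M. (2 * Re (c * lin u \<omega>)) ^ k)"
    by simp
  also have "\<dots> = (\<Sum>j\<le>k. cis ((2 * real j - real k) * \<theta>) * of_nat (k choose j) * (LINT \<omega>|M. lin u \<omega> ^ j * cnj (lin u \<omega>) ^ (k - j)))"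
    unfolding integral_complex_of_real[symmetric] expand
    by (subst Bochner_Integration.integral_sum) (auto intro!: integrable_lin_power integrable_mult_right)
  finally show ?thesis by (simp add: mult_ac)
qed

lemma integral_lin_power:
  "(LINT \<omega>|M. lin u \<omega> ^ p * cnj (lin u \<omega>) ^ q) = (if p = q then fact p * lin_var u ^ p else 0)"
proof -
  define k where "k = p + q"
  have "of_nat (k choose p) * (LINT \<omega>|M. lin u \<omega> ^ p * cnj (lin u \<omega>) ^ (k - p))
    = (if 2 * p = k then complex_of_real (2 ^ k * (sqrt (lin_var u / 2) ^ k * (LINT x|std_normal_distribution. x ^ k))) else 0)"
    using sum_rotated_lin_moments
    by (rule constant_trig_poly_coeff[where e="\<lambda>j. of_nat (k choose j) * (LINT \<omega>|M. lin u \<omega> ^ j * cnj (lin u \<omega>) ^ (k - j))"])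
      (simp add: k_def)
  moreover have "of_nat (k choose p) \<noteq> (0::complex)" by (simp add: k_def)
  ultimately show ?thesis
    using std_normal_even_moment_scaled[OF lin_var_nonneg[of u], of p]
    by (auto simp: k_def mult_2)
qed

definition cov :: "complex \<times> complex \<Rightarrow> complex \<times> complex \<Rightarrow> complex" where
  "cov u w = fst u * cnj (fst w) * complex_of_real (sX\<^sup>2) + fst u * cnj (snd w) * (rho * sX * sY)
     + snd u * cnj (fst w) * (cnj rho * sX * sY) + snd u * cnj (snd w) * complex_of_real (sY\<^sup>2)"

definition wick :: "nat \<Rightarrow> (nat \<Rightarrow> complex \<times> complex) \<Rightarrow> nat \<Rightarrow> (nat \<Rightarrow> complex \<times> complex) \<Rightarrow> complex"
  where "wick a A b B = (if a = b then (\<Sum>\<pi> | \<pi> permutes {..<a}. \<Prod>k<a. cov (A (\<pi> k)) (B k)) else 0)"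

lemma lin_add_scaled: "lin (add_scaled p z q) \<omega> = lin p \<omega> + z * lin q \<omega>"
  unfolding lin_def add_scaled_def by (simp add: algebra_simps)

lemma cov_add_scaled_left: "cov (add_scaled p z q) w = cov p w + z * cov q w"
  and cov_add_scaled_right: "cov w (add_scaled p z q) = cov w p + cnj z * cov w q"
  unfolding cov_def add_scaled_def by (simp_all add: algebra_simps)

lemma cov_self: "cov u u = lin_var u"
proof -
  have norm_fst: "fst u * cnj (fst u) = complex_of_real ((cmod (fst u))\<^sup>2)"
    and norm_snd: "snd u * cnj (snd u) = complex_of_real ((cmod (snd u))\<^sup>2)"
    by (rule complex_norm_square[symmetric])+
  have cross: "fst u * cnj (snd u) * rho + snd u * cnj (fst u) * cnj rho
      = complex_of_real (2 * Re (fst u * cnj (snd u) * rho))"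
    using complex_add_cnj[of "fst u * cnj (snd u) * rho"] by (simp add: mult_ac)
  have "cov u u = (fst u * cnj (fst u)) * complex_of_real (sX\<^sup>2) + (snd u * cnj (snd u)) * complex_of_real (sY\<^sup>2)
      + (fst u * cnj (snd u) * rho + snd u * cnj (fst u) * cnj rho) * complex_of_real (sX * sY)"
    unfolding cov_def by (simp add: algebra_simps)
  also have "\<dots> = lin_var u"
    unfolding norm_fst norm_snd cross lin_var_def by (simp add: algebra_simps)
  finally show ?thesis .
qed

lemma moment_linear_left:
  assumes "i < a"
  shows "moment a (A(i := add_scaled p z q)) b B = moment a (A(i := p)) b B + z * moment a (A(i := q)) b B"
proof -
  have "mixed_prod a (A(i := add_scaled p z q)) b B \<omega>
      = mixed_prod a (A(i := p)) b B \<omega> + z * mixed_prod a (A(i := q)) b B \<omega>" for \<omega>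
    using assms prod_fun_upd[of "{..<a}" i "\<lambda>_ v. lin v \<omega>" A]
    unfolding mixed_prod_def by (simp add: lin_add_scaled algebra_simps)
  then have "mixed_prod a (A(i := add_scaled p z q)) b B
      = (\<lambda>\<omega>. mixed_prod a (A(i := p)) b B \<omega> + z * mixed_prod a (A(i := q)) b B \<omega>)"
    by (intro ext)
  then show ?thesis
    unfolding moment_def by (simp add: integrable_mixed_prod)
qed

lemma moment_antilinear_right:
  assumes "i < b"
  shows "moment a A b (B(i := add_scaled p z q)) = moment a A b (B(i := p)) + cnj z * moment a A b (B(i := q))"
proof -
  have "mixed_prod a A b (B(i := add_scaled p z q)) \<omega>
      = mixed_prod a A b (B(i := p)) \<omega> + cnj z * mixed_prod a A b (B(i := q)) \<omega>" for \<omega>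
    using assms prod_fun_upd[of "{..<b}" i "\<lambda>_ v. cnj (lin v \<omega>)" B]
    unfolding mixed_prod_def by (simp add: lin_add_scaled algebra_simps)
  then have "mixed_prod a A b (B(i := add_scaled p z q))
      = (\<lambda>\<omega>. mixed_prod a A b (B(i := p)) \<omega> + cnj z * mixed_prod a A b (B(i := q)) \<omega>)"
    by (intro ext)
  then show ?thesis
    unfolding moment_def by (simp add: integrable_mixed_prod)
qed

lemma wick_linear_left:
  assumes "i < a"
  shows "wick a (A(i := add_scaled p z q)) b B = wick a (A(i := p)) b B + z * wick a (A(i := q)) b B"
proof -
  have "(\<Prod>k<a. cov ((A(i := add_scaled p z q)) (\<pi> k)) (B k))
      = (\<Prod>k<a. cov ((A(i := p)) (\<pi> k)) (B k)) + z * (\<Prod>k<a. cov ((A(i := q)) (\<pi> k)) (B k))"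
    if "\<pi> permutes {..<a}" for \<pi>
  proof -
    have "(\<Prod>k<a. cov ((A(i := v)) (\<pi> k)) (B k))
        = cov v (B (inv \<pi> i)) * (\<Prod>j\<in>{..<a} - {i}. cov (A j) (B (inv \<pi> j)))" for v
      unfolding prod_permutes_inv[OF that, of "\<lambda>j k. cov ((A(i := v)) j) (B k)"]
      using assms by (intro prod_fun_upd[where g="\<lambda>j w. cov w (B (inv \<pi> j))"]) auto
    then show ?thesis by (simp add: cov_add_scaled_left algebra_simps)
  qed
  then have "(\<Sum>\<pi> | \<pi> permutes {..<a}. \<Prod>k<a. cov ((A(i := add_scaled p z q)) (\<pi> k)) (B k))
    = (\<Sum>\<pi> | \<pi> permutes {..<a}. (\<Prod>k<a. cov ((A(i := p)) (\<pi> k)) (B k)) + z * (\<Prod>k<a. cov ((A(i := q)) (\<pi> k)) (B k)))"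
    by (intro sum.cong) auto
  then show ?thesis
    unfolding wick_def by (cases "a = b") (simp_all add: sum.distrib sum_distrib_left)
qed

lemma wick_antilinear_right:
  assumes "i < b"
  shows "wick a A b (B(i := add_scaled p z q)) = wick a A b (B(i := p)) + cnj z * wick a A b (B(i := q))"
proof -
  have "(\<Prod>k<b. cov (A (\<pi> k)) ((B(i := add_scaled p z q)) k))
      = (\<Prod>k<b. cov (A (\<pi> k)) ((B(i := p)) k)) + cnj z * (\<Prod>k<b. cov (A (\<pi> k)) ((B(i := q)) k))" for \<pi>
    using assms prod_fun_upd[of "{..<b}" i "\<lambda>k. cov (A (\<pi> k))"]
    by (simp add: cov_add_scaled_right algebra_simps)
  then show ?thesis
    unfolding wick_def by (simp add: sum.distrib sum_distrib_left)
qed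

lemma moment_permute_left:
  assumes "\<sigma> permutes {..<a}"
  shows "moment a (A \<circ> \<sigma>) b B = moment a A b B"
proof -
  have "(\<Prod>k<a. lin ((A \<circ> \<sigma>) k) \<omega>) = (\<Prod>k<a. lin (A k) \<omega>)" for \<omega>
    using prod.permute[OF assms, of "\<lambda>k. lin (A k) \<omega>"] by (simp add: comp_def)
  then show ?thesis by (simp add: moment_def mixed_prod_def)
qed

lemma moment_permute_right:
  assumes "\<sigma> permutes {..<b}"
  shows "moment a A b (B \<circ> \<sigma>) = moment a A b B"
proof -
  have "(\<Prod>k<b. cnj (lin ((B \<circ> \<sigma>) k) \<omega>)) = (\<Prod>k<b. cnj (lin (B k) \<omega>))" for \<omega>
    using prod.permute[OF assms, of "\<lambda>k. cnj (lin (B k) \<omega>)"] by (simp add: comp_def)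
  then show ?thesis by (simp add: moment_def mixed_prod_def)
qed

lemma wick_permute_left:
  assumes "\<sigma> permutes {..<a}"
  shows "wick a (A \<circ> \<sigma>) b B = wick a A b B"
  unfolding wick_def using setum_permutations_compose_left[OF assms, of "\<lambda>\<pi>. \<Prod>k<a. cov (A (\<pi> k)) (B k)"]
  by (cases "a = b") auto

lemma wick_permute_right:
  assumes "\<sigma> permutes {..<b}"
  shows "wick a A b (B \<circ> \<sigma>) = wick a A b B"
proof -
  have "(\<Prod>k<b. cov (A (\<pi> k)) (B (\<sigma> k))) = (\<Prod>k<b. cov (A ((\<pi> \<circ> inv \<sigma>) k)) (B k))" for \<pi>
    using prod.permute[OF assms, of "\<lambda>k. cov (A ((\<pi> \<circ> inv \<sigma>) k)) (B k)"] permutes_inverses(2)[OF assms]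
    by simp
  then show ?thesis
    unfolding wick_def
    using sum_permutations_compose_right[OF permutes_inv[OF assms], of "\<lambda>\<pi>. \<Prod>k<b. cov (A (\<pi> k)) (B k)"]
    by simp
qed

lemma moment_cong:
  "(\<And>i. i < a \<Longrightarrow> A i = A' i) \<Longrightarrow> (\<And>i. i < b \<Longrightarrow> B i = B' i) \<Longrightarrow> moment a A b B = moment a A' b B'"
  unfolding moment_def mixed_prod_def
  by (intro arg_cong[where f="integral\<^sup>L M"] ext arg_cong2[where f="(*)"] prod.cong) auto

lemma wick_cong:
  assumes "\<And>i. i < a \<Longrightarrow> A i = A' i" "\<And>i. i < b \<Longrightarrow> B i = B' i"
  shows "wick a A b B = wick a A' b B'"
proof -
  have "(\<Prod>k<a. cov (A (\<pi> k)) (B k)) = (\<Prod>k<a. cov (A' (\<pi> k)) (B' k))" if "\<pi> permutes {..<a}" "a = b" for \<pi>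
    using that assms permutes_in_image[OF that(1)] by (intro prod.cong) auto
  then show ?thesis
    unfolding wick_def by (auto intro!: sum.cong)
qed

lemma moment_diagonal: "moment a (\<lambda>_. u) b (\<lambda>_. u) = wick a (\<lambda>_. u) b (\<lambda>_. u)"
  using integral_lin_power[of u a b] card_permutations[of "{..<a}" a]
  by (cases "a = b") (simp_all add: moment_def mixed_prod_def wick_def cov_self)

theorem moment_eq_wick: "moment a A b B = wick a A b B"
proof -
  interpret symmetric_sesquilinear "\<lambda>a A b B. moment a A b B - wick a A b B" add_scaled
  proof
    show "moment a A b B - wick a A b B = moment a A' b B' - wick a A' b B'"
      if "\<And>i. i < a \<Longrightarrow> A i = A' i" "\<And>i. i < b \<Longrightarrow> B i = B' i" for a A A' b B B'
      using moment_cong[OF that] wick_cong[OF that] by simp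
  qed (simp_all add: moment_linear_left wick_linear_left moment_antilinear_right wick_antilinear_right
      moment_permute_left wick_permute_left moment_permute_right wick_permute_right algebra_simps)
  show ?thesis using eq_0 by (simp add: moment_diagonal)
qed

lemma lin_split_vec: "lin (split_vec i k) \<omega> = (if k < i then VX \<omega> else VY \<omega>)"
  by (simp add: lin_def split_vec_def)

lemma listA_eq_lin: "listA VX VY t i k = lin (split_vec i k)"
  and listB_eq_cnj_lin: "listB VX VY t j k = (\<lambda>\<omega>. cnj (lin (split_vec (t - j) k) \<omega>))"
  by (auto simp: listA_def listB_def lin_split_vec fun_eq_iff)

lemma mixed_prod_split_vec:
  "mixed_prod (i + b) (split_vec i) (a + j) (split_vec a) \<omega> = VX \<omega> ^ i * cnj (VY \<omega>) ^ j * cnj (VX \<omega>) ^ a * VY \<omega> ^ b"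
  unfolding mixed_prod_def lin_split_vec
  by (simp add: if_distrib[of cnj] prod_lessThan_split mult_ac)


lemma integral_monomial:
  "(LINT \<omega>|M. VX \<omega> ^ i * cnj (VY \<omega>) ^ j * cnj (VX \<omega>) ^ a * VY \<omega> ^ b)
    = (if i + b = a + j then wick (i + b) (split_vec i) (i + b) (split_vec a) else 0)"
  using moment_eq_wick[of "i + b" "split_vec i" "a + j" "split_vec a"]
  by (simp add: moment_def mixed_prod_split_vec wick_def)

lemma integrable_monomial: "integrable M (\<lambda>\<omega>. VX \<omega> ^ i * cnj (VY \<omega>) ^ j * cnj (VX \<omega>) ^ a * VY \<omega> ^ b)"
  using integrable_mixed_prod[of "i + b" "split_vec i" "a + j" "split_vec a"]
  unfolding mixed_prod_split_vec[abs_def] .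

lemma sum_permutes_listA_listB:
  "(\<Sum>\<pi> | \<pi> permutes {..<t}. \<Prod>k<t. (LINT \<omega>|M. listA VX VY t i (\<pi> k) \<omega> * listB VX VY t j k \<omega>))
    = wick t (split_vec i) t (split_vec (t - j))"
proof -
  have "(LINT \<omega>|M. lin u \<omega> * cnj (lin w \<omega>)) = cov u w" for u w
    using moment_eq_wick[of 1 "\<lambda>_. u" 1 "\<lambda>_. w"] card_permutations[of "{..<1::nat}" 1]
    by (simp add: moment_def mixed_prod_def wick_def)
  then show ?thesis
    by (simp add: listA_eq_lin listB_eq_cnj_lin wick_def)
qed

lemma integral_product_power_cnj_power:
  "(LINT \<omega>|M. ((muX + VX \<omega>) * cnj (muY + VY \<omega>)) ^ m * cnj (((muX + VX \<omega>) * cnj (muY + VY \<omega>)) ^ n))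
    = (\<Sum>t\<le>m + n. \<Sum>i\<le>t. \<Sum>j\<le>t.
       of_nat ((m choose i) * (m choose j) * (n choose (t - j)) * (n choose (t - i)))
       * muX ^ (m - i) * cnj (muY ^ (m - j)) * cnj (muX ^ (n + j - t)) * muY ^ (n + i - t)
       * wick t (split_vec i) t (split_vec (t - j)))"
    (is "_ = (\<Sum>t\<le>m + n. \<Sum>i\<le>t. \<Sum>j\<le>t. ?T t i j)")
proof -
  let ?c = "\<lambda>i j a b. of_nat ((m choose i) * (m choose j) * (n choose a) * (n choose b))
    * muX ^ (m - i) * cnj muY ^ (m - j) * cnj muX ^ (n - a) * muY ^ (n - b)"
  let ?E = "\<lambda>i j a b. LINT \<omega>|M. VX \<omega> ^ i * cnj (VY \<omega>) ^ j * cnj (VX \<omega>) ^ a * VY \<omega> ^ b"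
  have "(LINT \<omega>|M. ((muX + VX \<omega>) * cnj (muY + VY \<omega>)) ^ m * cnj (((muX + VX \<omega>) * cnj (muY + VY \<omega>)) ^ n))
      = (\<Sum>i\<le>m. \<Sum>j\<le>m. \<Sum>b\<le>n. \<Sum>a\<le>n. ?c i j a b * ?E i j a b)"
    unfolding power_product_binomial_expansion by (simp add: integrable_monomial integrable_sum)
  also have "\<dots> = (\<Sum>t\<le>m + n. \<Sum>i\<le>t. \<Sum>j\<le>t. ?T t i j)"
  proof (rule sum_balanced_reindex)
    fix i j a b :: nat
    assume "i + b = a + j"
    moreover have "n - a = n + j - (i + b)" "n - b = n + i - (i + b)" "a = i + b - j"
      using calculation by auto
    ultimately show "?c i j a b * ?E i j a b = ?T (i + b) i j"
      by (simp add: integral_monomial)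
  qed (auto simp: integral_monomial not_le)
  finally show ?thesis .
qed

end

theorem proposition1:
  fixes M :: "'a measure" and VX VY :: "'a \<Rightarrow> complex"
    and muX muY rho :: complex and sX sY :: real and m n :: nat
  assumes "prob_space M"
    and "sX > 0" and "sY > 0" and "cmod rho \<le> 1"
    and "jointly_cscg M VX VY sX sY rho"
  shows "(LINT \<omega>|M. ((muX + VX \<omega>) * cnj (muY + VY \<omega>)) ^ m
                     * cnj (((muX + VX \<omega>) * cnj (muY + VY \<omega>)) ^ n)) =
    (\<Sum>t\<le>m + n. \<Sum>i\<le>t. \<Sum>j\<le>t.
       of_nat ((m choose i) * (m choose j) * (n choose (t - j)) * (n choose (t - i)))
       * muX ^ (m - i) * cnj (muY ^ (m - j)) * cnj (muX ^ (n + j - t)) * muY ^ (n + i - t)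
       * (\<Sum>\<pi> | \<pi> permutes {..<t}.
            \<Prod>k<t. (LINT \<omega>|M. listA VX VY t i (\<pi> k) \<omega> * listB VX VY t j k \<omega>)))"
proof -
  interpret cscg_pair M VX VY sX sY rho
    by (intro cscg_pair.intro cscg_pair_axioms.intro assms)
  show ?thesis
    unfolding sum_permutes_listA_listB by (rule integral_product_power_cnj_power)
qed

end
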